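(* Let $V$ be an irreducible integrable $\hat\tau(d,q)$-module with finite-dimensional weight spaces. Then there exists $\lambda\in P(V)$ such that $V_{\lambda+\eta}=0$ for all $\eta\in\dot Q_+\setminus\{0\}$.
   Context: Fix integers $n\ge2$, $d\ge2$. Let $q=(q_{ij})_{1\le i,j\le n}$ with $q_{ij}\in\mathbb C^\times$ roots of unity, $q_{ii}=1$, $q_{ij}=q_{ji}^{-1}$. The rational quantum torus $\mathbb C_q$ is the associative algebra generated by $t_1^{\pm1},\dots,t_n^{\pm1}$ with $t_it_i^{-1}=t_i^{-1}t_i=1$ and $t_it_j=q_{ij}t_jt_i$; for $a\in\mathbb Z^n$ put $t^a=t_1^{a_1}\cdots t_n^{a_n}$, so $t^at^b=f(a,b)t^bt^a$ with $f(a,b)=\prod_{i,j}q_{ji}^{a_jb_i}$. Let $\operatorname{rad}f=\{a\in\mathbb Z^n: f(a,b)=1\ \forall b\}$. $\tau(d,q)=\mathfrak{sl}_d(\mathbb C_q)$ is the Lie algebra (commutator bracket) of $d\times d$ matrices over $\mathbb C_q$ whose trace lies in $[\mathbb C_q,\mathbb C_q]$ (the span of $t^a$, $a\notin\operatorname{rad}f$). Let $J\subset\mathbb C_q\otimes\mathbb C_q$ be spanned by $x\otimes y+y\otimes x$ and $xy\otimes z+yz\otimes x+zx\otimes y$; for $a+b\in\operatorname{rad}f$ let $\langle t^a,t^b\rangle$ be the image of $t^a\otimes t^b$ in $(\mathbb C_q\otimes\mathbb C_q)/J$, and $HC_1(\mathbb C_q)$ their span. $\tilde\tau(d,q)=\tau(d,q)\oplus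 HC_1(\mathbb C_q)$ with $HC_1(\mathbb C_q)$ central and $[X\otimes t^a,Y\otimes t^b]=(XY\otimes t^at^b-YX\otimes t^bt^a)+\mathrm{Tr}(XY)\langle t^a,t^b\rangle$ if $a+b\in\operatorname{rad}f$ (no last term otherwise). $\hat\tau(d,q)=\tilde\tau(d,q)\oplus D$, $D=\bigoplus_i\mathbb Cd_i$, $[d_i,d_j]=0$, $[d_i,X\otimes t^a]=a_iX\otimes t^a$, $[d_i,\langle t^a,t^b\rangle]=(a_i+b_i)\langle t^a,t^b\rangle$. Put $c_i=\langle t_i,t_i^{-1}\rangle$. Let $\dot{\mathfrak h}$ be the trace-zero diagonal matrices (as $\dot{\mathfrak h}\otimes1$), $\mathfrak h=\dot{\mathfrak h}\oplus\bigoplus_i\mathbb Cc_i\oplus\bigoplus_i\mathbb Cd_i$. A $\hat\tau(d,q)$-module $V$ is integrable if $V=\bigoplus_{\lambda\in\mathfrak h^*}V_\lambda$ with $V_\lambda=\{v: hv=\lambda(h)v\ \forall h\in\mathfrak h\}$, and for every root $\alpha$ of $\mathfrak{sl}_d(\mathbb C)$ with root vector $x_\alpha$, every $m\in\mathbb Z^n$, $v\in V$ there is $k$ with $(x_\alpha\otimes t^m)^kv=0$. $P(V)=\{\lambda: V_\lambda\neq0\}$. $\dot Q_+$ denotes the set of non-negative integer combinations of the simple roots $\alpha_1,\dots,\alpha_{d-1}$ of $\mathfrak{sl}_d(\mathbb C)$ (with respect to $\dot{\mathfrak h}$ and upper triangular matrices), regarded in $\mathfrak h^*$ by letting them vanish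 on all $c_i,d_i$. *)

theory Defs
  imports Complex_Main "Jordan_Normal_Form.Matrix"
begin

text \<open>Elements of Z^n are functions nat => int vanishing at indices >= n.\<close>
definition zvec :: "nat \<Rightarrow> (nat \<Rightarrow> int) set" where
  "zvec n = {a. \<forall>i\<ge>n. a i = 0}"

definition unitvec :: "nat \<Rightarrow> nat \<Rightarrow> int" where
  "unitvec i = (\<lambda>k. if k = i then 1 else 0)"

definition vadd :: "(nat \<Rightarrow> int) \<Rightarrow> (nat \<Rightarrow> int) \<Rightarrow> nat \<Rightarrow> int" where
  "vadd a b = (\<lambda>k. a k + b k)"

definition vneg :: "(nat \<Rightarrow> int) \<Rightarrow> nat \<Rightarrow> int" where
  "vneg a = (\<lambda>k. - a k)"

definition qmatrix :: "nat \<Rightarrow> (nat \<Rightarrow> nat \<Rightarrow> complex) \<Rightarrow> bool" where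
  "qmatrix n q \<longleftrightarrow> (\<forall>i<n. \<forall>j<n. (\<exists>k::nat. k > 0 \<and> q i j ^ k = 1) \<and> q i j = inverse (q j i))
                    \<and> (\<forall>i<n. q i i = 1)"

text \<open>t^a t^b = f(a,b) t^b t^a,  f(a,b) = prod_{i,j} q_{ji}^{a_j b_i}.\<close>
definition fq :: "nat \<Rightarrow> (nat \<Rightarrow> nat \<Rightarrow> complex) \<Rightarrow> (nat \<Rightarrow> int) \<Rightarrow> (nat \<Rightarrow> int) \<Rightarrow> complex" where
  "fq n q a b = (\<Prod>i<n. \<Prod>j<n. q j i powi (a j * b i))"

text \<open>t^a t^b = sigma(a,b) t^(a+b), where t^a = t_1^a_1 ... t_n^a_n; sigma(a,b) = prod_{i>j} q_ij^(a_i b_j).\<close>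
definition sig :: "nat \<Rightarrow> (nat \<Rightarrow> nat \<Rightarrow> complex) \<Rightarrow> (nat \<Rightarrow> int) \<Rightarrow> (nat \<Rightarrow> int) \<Rightarrow> complex" where
  "sig n q a b = (\<Prod>i<n. \<Prod>j<i. q i j powi (a i * b j))"

definition radf :: "nat \<Rightarrow> (nat \<Rightarrow> nat \<Rightarrow> complex) \<Rightarrow> (nat \<Rightarrow> int) set" where
  "radf n q = {a \<in> zvec n. \<forall>b\<in>zvec n. fq n q a b = 1}"

definition mtrace :: "complex mat \<Rightarrow> complex" where
  "mtrace X = (\<Sum>i<dim_row X. X $$ (i, i))"

definition elem_mat :: "nat \<Rightarrow> nat \<Rightarrow> nat \<Rightarrow> complex mat" where
  "elem_mat d i j = mat d d (\<lambda>(k, l). if k = i \<and> l = j then 1 else 0)"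

definition diag_of :: "nat \<Rightarrow> (nat \<Rightarrow> complex) \<Rightarrow> complex mat" where
  "diag_of d x = mat d d (\<lambda>(k, l). if k = l then x k else 0)"

text \<open>X (x) t^a lies in tau(d,q) = sl_d(C_q) iff trace X (x) t^a lies in [C_q,C_q],
  i.e. iff trace X = 0 or a is not in rad f.\<close>
definition tau_elem :: "nat \<Rightarrow> nat \<Rightarrow> (nat \<Rightarrow> nat \<Rightarrow> complex) \<Rightarrow> complex mat \<Rightarrow> (nat \<Rightarrow> int) \<Rightarrow> bool" where
  "tau_elem n d q X a \<longleftrightarrow> X \<in> carrier_mat d d \<and> a \<in> zvec n \<and> (mtrace X = 0 \<or> a \<notin> radf n q)"

definition comm :: "('v::ab_group_add \<Rightarrow> 'v) \<Rightarrow> ('v \<Rightarrow> 'v) \<Rightarrow> 'v \<Rightarrow> 'v" where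
  "comm A B = (\<lambda>v. A (B v) - B (A v))"

text \<open>A representation of hat-tau(d,q) on the complex vector space ('v, sc), given by its
  values on the spanning elements: rho X a = action of X (x) t^a,
  z a b = action of <t^a,t^b> (a+b in rad f), D i = action of d_(i+1).
  Since tau = (+)_a {X : tau_elem X a} (x) t^a, HC_1 = (+)_(g in rad f) (span of t^a (x) t^b, a+b=g)/J_g
  (J being spanned by its homogeneous generators) and D = span d_i,
  a linear map hat-tau -> End(V) is exactly such data, linear in X and killing the
  generators of J; it is a Lie algebra homomorphism iff the bracket relations hold on spanning elements.\<close>
definition tau_hat_module ::
  "nat \<Rightarrow> nat \<Rightarrow> (nat \<Rightarrow> nat \<Rightarrow> complex) \<Rightarrow> (complex \<Rightarrow> 'v::ab_group_add \<Rightarrow> 'v)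
   \<Rightarrow> (complex mat \<Rightarrow> (nat \<Rightarrow> int) \<Rightarrow> 'v \<Rightarrow> 'v)
   \<Rightarrow> ((nat \<Rightarrow> int) \<Rightarrow> (nat \<Rightarrow> int) \<Rightarrow> 'v \<Rightarrow> 'v) \<Rightarrow> (nat \<Rightarrow> 'v \<Rightarrow> 'v) \<Rightarrow> bool" where
  "tau_hat_module n d q sc rho z D \<longleftrightarrow>
     vector_space sc
   \<comment> \<open>all operators are linear endomorphisms of V\<close>
   \<and> (\<forall>X a. tau_elem n d q X a \<longrightarrow> Vector_Spaces.linear sc sc (rho X a))
   \<and> (\<forall>a b. a \<in> zvec n \<and> b \<in> zvec n \<and> vadd a b \<in> radf n q \<longrightarrow> Vector_Spaces.linear sc sc (z a b))
   \<and> (\<forall>i<n. Vector_Spaces.linear sc sc (D i))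
   \<comment> \<open>linearity of X (x) t^a in X\<close>
   \<and> (\<forall>X Y a. tau_elem n d q X a \<and> tau_elem n d q Y a \<longrightarrow>
        rho (X + Y) a = (\<lambda>v. rho X a v + rho Y a v))
   \<and> (\<forall>X a c. tau_elem n d q X a \<longrightarrow> rho (c \<cdot>\<^sub>m X) a = (\<lambda>v. sc c (rho X a v)))
   \<comment> \<open>relations of J: x(x)y + y(x)x and xy(x)z + yz(x)x + zx(x)y (on monomials)\<close>
   \<and> (\<forall>a b. a \<in> zvec n \<and> b \<in> zvec n \<and> vadd a b \<in> radf n q \<longrightarrow>
        (\<forall>v. z a b v + z b a v = 0))
   \<and> (\<forall>a b c. a \<in> zvec n \<and> b \<in> zvec n \<and> c \<in> zvec n \<and> vadd (vadd a b) c \<in> radf n q \<longrightarrow>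
        (\<forall>v. sc (sig n q a b) (z (vadd a b) c v) + sc (sig n q b c) (z (vadd b c) a v)
             + sc (sig n q c a) (z (vadd c a) b v) = 0))
   \<comment> \<open>bracket [X(x)t^a, Y(x)t^b]\<close>
   \<and> (\<forall>X Y a b. tau_elem n d q X a \<and> tau_elem n d q Y b \<longrightarrow>
        comm (rho X a) (rho Y b) =
          (\<lambda>v. rho (sig n q a b \<cdot>\<^sub>m (X * Y) - sig n q b a \<cdot>\<^sub>m (Y * X)) (vadd a b) v
               + (if vadd a b \<in> radf n q then sc (mtrace (X * Y)) (z a b v) else 0)))
   \<comment> \<open>HC_1 is central\<close>
   \<and> (\<forall>X a b c. tau_elem n d q X a \<and> b \<in> zvec n \<and> c \<in> zvec n \<and> vadd b c \<in> radf n q \<longrightarrow>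
        comm (rho X a) (z b c) = (\<lambda>v. 0))
   \<and> (\<forall>a b c e. a \<in> zvec n \<and> b \<in> zvec n \<and> vadd a b \<in> radf n q \<and>
               c \<in> zvec n \<and> e \<in> zvec n \<and> vadd c e \<in> radf n q \<longrightarrow>
        comm (z a b) (z c e) = (\<lambda>v. 0))
   \<comment> \<open>derivations\<close>
   \<and> (\<forall>i<n. \<forall>j<n. comm (D i) (D j) = (\<lambda>v. 0))
   \<and> (\<forall>i<n. \<forall>X a. tau_elem n d q X a \<longrightarrow>
        comm (D i) (rho X a) = (\<lambda>v. sc (of_int (a i)) (rho X a v)))
   \<and> (\<forall>i<n. \<forall>a b. a \<in> zvec n \<and> b \<in> zvec n \<and> vadd a b \<in> radf n q \<longrightarrow>
        comm (D i) (z a b) = (\<lambda>v. sc (of_int (a i + b i)) (z a b v)))"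

text \<open>Weights lambda in h^* are encoded as (mu, gam, del): lambda(diag(x)) = sum_k mu_k x_k on
  trace-zero diagonal matrices (mu is determined up to an additive constant),
  lambda(c_i) = gam i, lambda(d_i) = del i.\<close>
definition weight_space ::
  "nat \<Rightarrow> nat \<Rightarrow> (complex \<Rightarrow> 'v::ab_group_add \<Rightarrow> 'v)
   \<Rightarrow> (complex mat \<Rightarrow> (nat \<Rightarrow> int) \<Rightarrow> 'v \<Rightarrow> 'v)
   \<Rightarrow> ((nat \<Rightarrow> int) \<Rightarrow> (nat \<Rightarrow> int) \<Rightarrow> 'v \<Rightarrow> 'v) \<Rightarrow> (nat \<Rightarrow> 'v \<Rightarrow> 'v)
   \<Rightarrow> (nat \<Rightarrow> complex) \<times> (nat \<Rightarrow> complex) \<times> (nat \<Rightarrow> complex) \<Rightarrow> 'v set" where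
  "weight_space n d sc rho z D lam =
     (case lam of (mu, gam, del) \<Rightarrow>
       {v. (\<forall>x. (\<Sum>k<d. x k) = 0 \<longrightarrow> rho (diag_of d x) (\<lambda>_. 0) v = sc (\<Sum>k<d. mu k * x k) v)
         \<and> (\<forall>i<n. z (unitvec i) (vneg (unitvec i)) v = sc (gam i) v)
         \<and> (\<forall>i<n. D i v = sc (del i) v)})"

definition weight_module ::
  "nat \<Rightarrow> nat \<Rightarrow> (complex \<Rightarrow> 'v::ab_group_add \<Rightarrow> 'v)
   \<Rightarrow> (complex mat \<Rightarrow> (nat \<Rightarrow> int) \<Rightarrow> 'v \<Rightarrow> 'v)
   \<Rightarrow> ((nat \<Rightarrow> int) \<Rightarrow> (nat \<Rightarrow> int) \<Rightarrow> 'v \<Rightarrow> 'v) \<Rightarrow> (nat \<Rightarrow> 'v \<Rightarrow> 'v) \<Rightarrow> bool" where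
  "weight_module n d sc rho z D \<longleftrightarrow>
     UNIV \<subseteq> module.span sc (\<Union>lam. weight_space n d sc rho z D lam)"

definition finite_weight_spaces ::
  "nat \<Rightarrow> nat \<Rightarrow> (complex \<Rightarrow> 'v::ab_group_add \<Rightarrow> 'v)
   \<Rightarrow> (complex mat \<Rightarrow> (nat \<Rightarrow> int) \<Rightarrow> 'v \<Rightarrow> 'v)
   \<Rightarrow> ((nat \<Rightarrow> int) \<Rightarrow> (nat \<Rightarrow> int) \<Rightarrow> 'v \<Rightarrow> 'v) \<Rightarrow> (nat \<Rightarrow> 'v \<Rightarrow> 'v) \<Rightarrow> bool" where
  "finite_weight_spaces n d sc rho z D \<longleftrightarrow>
     (\<forall>lam. \<exists>B. finite B \<and> weight_space n d sc rho z D lam \<subseteq> module.span sc B)"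

text \<open>Integrability: root vectors of sl_d are (multiples of) E_ij, i ~= j.\<close>
definition integrable ::
  "nat \<Rightarrow> nat \<Rightarrow> (complex \<Rightarrow> 'v::ab_group_add \<Rightarrow> 'v)
   \<Rightarrow> (complex mat \<Rightarrow> (nat \<Rightarrow> int) \<Rightarrow> 'v \<Rightarrow> 'v)
   \<Rightarrow> ((nat \<Rightarrow> int) \<Rightarrow> (nat \<Rightarrow> int) \<Rightarrow> 'v \<Rightarrow> 'v) \<Rightarrow> (nat \<Rightarrow> 'v \<Rightarrow> 'v) \<Rightarrow> bool" where
  "integrable n d sc rho z D \<longleftrightarrow>
     weight_module n d sc rho z D
   \<and> (\<forall>i<d. \<forall>j<d. i \<noteq> j \<longrightarrow> (\<forall>m\<in>zvec n. \<forall>v. \<exists>k::nat. (rho (elem_mat d i j) m ^^ k) v = 0))"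

definition irreducible_module ::
  "nat \<Rightarrow> nat \<Rightarrow> (nat \<Rightarrow> nat \<Rightarrow> complex) \<Rightarrow> (complex \<Rightarrow> 'v::ab_group_add \<Rightarrow> 'v)
   \<Rightarrow> (complex mat \<Rightarrow> (nat \<Rightarrow> int) \<Rightarrow> 'v \<Rightarrow> 'v)
   \<Rightarrow> ((nat \<Rightarrow> int) \<Rightarrow> (nat \<Rightarrow> int) \<Rightarrow> 'v \<Rightarrow> 'v) \<Rightarrow> (nat \<Rightarrow> 'v \<Rightarrow> 'v) \<Rightarrow> bool" where
  "irreducible_module n d q sc rho z D \<longleftrightarrow>
     (UNIV :: 'v set) \<noteq> {0}
   \<and> (\<forall>W. module.subspace sc W
        \<and> (\<forall>X a. tau_elem n d q X a \<longrightarrow> rho X a ` W \<subseteq> W)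
        \<and> (\<forall>a b. a \<in> zvec n \<and> b \<in> zvec n \<and> vadd a b \<in> radf n q \<longrightarrow> z a b ` W \<subseteq> W)
        \<and> (\<forall>i<n. D i ` W \<subseteq> W)
        \<longrightarrow> W = {0} \<or> W = UNIV)"

text \<open>eta = sum_{j < d-1} m_j alpha_(j+1), with alpha_(j+1)(diag x) = x_j - x_(j+1):
  its mu-part, vanishing on c_i, d_i.\<close>
definition root_comb :: "nat \<Rightarrow> (nat \<Rightarrow> nat) \<Rightarrow> nat \<Rightarrow> complex" where
  "root_comb d m = (\<lambda>k. (if k < d - 1 then of_nat (m k) else 0)
                       - (if 0 < k \<and> k < d then of_nat (m (k - 1)) else 0))"

definition shift_weight ::
  "nat \<Rightarrow> (nat \<Rightarrow> complex) \<times> (nat \<Rightarrow> complex) \<times> (nat \<Rightarrow> complex) \<Rightarrow> (nat \<Rightarrow> nat)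
   \<Rightarrow> (nat \<Rightarrow> complex) \<times> (nat \<Rightarrow> complex) \<times> (nat \<Rightarrow> complex)" where
  "shift_weight d lam m = (case lam of (mu, gam, del) \<Rightarrow> ((\<lambda>k. mu k + root_comb d m k), gam, del))"

end

theory Submission
  imports Defs
begin

text \<open>
  The degree-zero copy of sl_d inside hat-tau(d,q) acts on an integrable module with locally
  nilpotent root vectors. The sl_2-string computation then shows that the labels of every weight
  differ by integers, that raising operators lead from any weight vector to a highest weight
  vector of no smaller pairing with \<open>2\<rho>\<close>, and that moving along the strings of the simple roots
  leads, without changing the eigenvalue of the Casimir operator, to a weight whose adjacent
  labels differ by at most one. Up to a common shift there are only finitely many such weights,
  and their weight spaces are finite-dimensional, so the Casimir operator has only finitely many
  eigenvalues on the vectors obtained this way. On a highest weight vector this eigenvalue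
  dominates the pairing with \<open>2\<rho>\<close>; hence this pairing, and with it the height of the
  \<open>\<eta> \<in> Q\<^sub>+\<close> with \<open>V\<^sub>\<lambda>\<^sub>+\<^sub>\<eta> \<noteq> 0\<close>, is bounded, and a weight of maximal height is the
  required one.
\<close>

lemma elem_mat_carrier [simp]: "elem_mat d a b \<in> carrier_mat d d"
  by (simp add: elem_mat_def)

lemma diag_of_carrier [simp]: "diag_of d x \<in> carrier_mat d d"
  by (simp add: diag_of_def)

lemma one_smult_mat [simp]: "(1::'a::semiring_1) \<cdot>\<^sub>m A = A"
  by (intro eq_matI) auto

lemma mtrace_elem_mat: "a < d \<Longrightarrow> mtrace (elem_mat d a b) = (if a = b then 1 else 0)"
  by (cases "a = b") (auto simp: mtrace_def elem_mat_def intro: sum.neutral)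

lemma mtrace_diag_of: "mtrace (diag_of d x) = (\<Sum>k<d. x k)"
  by (simp add: mtrace_def diag_of_def)

lemma mtrace_commutator:
  fixes X Y :: "complex mat"
  assumes "X \<in> carrier_mat d d" and "Y \<in> carrier_mat d d"
  shows "mtrace (X * Y - Y * X) = 0"
proof -
  have "mtrace (X * Y - Y * X) = (\<Sum>i<d. \<Sum>k<d. X $$ (i, k) * Y $$ (k, i)) - (\<Sum>i<d. \<Sum>k<d. Y $$ (i, k) * X $$ (k, i))"
    using assms by (simp add: mtrace_def scalar_prod_def atLeast0LessThan sum_subtractf)
  also have "(\<Sum>i<d. \<Sum>k<d. Y $$ (i, k) * X $$ (k, i)) = (\<Sum>i<d. \<Sum>k<d. X $$ (i, k) * Y $$ (k, i))"
    by (subst sum.swap) (simp add: mult.commute)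
  finally show ?thesis by simp
qed

lemma elem_mat_mult:
  assumes "a < d" "b < d" "c < d" "e < d"
  shows "elem_mat d a b * elem_mat d c e = (if b = c then elem_mat d a e else 0\<^sub>m d d)"
  using assms by (intro eq_matI)
    (auto simp: elem_mat_def scalar_prod_def atLeast0LessThan if_distrib[of "times _"] cong: if_cong)

lemma diag_of_mult_elem_mat:
  "p < d \<Longrightarrow> r < d \<Longrightarrow> diag_of d x * elem_mat d p r = x p \<cdot>\<^sub>m elem_mat d p r"
  by (intro eq_matI)
    (auto simp: elem_mat_def diag_of_def scalar_prod_def atLeast0LessThan if_distrib[of "times _"] cong: if_cong)

lemma elem_mat_mult_diag_of:
  "p < d \<Longrightarrow> r < d \<Longrightarrow> elem_mat d p r * diag_of d x = x r \<cdot>\<^sub>m elem_mat d p r"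
  by (intro eq_matI)
    (auto simp: elem_mat_def diag_of_def scalar_prod_def atLeast0LessThan if_distrib[of "times _"] cong: if_cong)

lemma elem_mat_minus_scalar:
  "a < d \<Longrightarrow> elem_mat d a a - c \<cdot>\<^sub>m 1\<^sub>m d = diag_of d (\<lambda>k. (if k = a then 1 else 0) - c)"
  by (intro eq_matI) (auto simp: elem_mat_def diag_of_def)

lemma commutator_shift_one_mat:
  fixes X Y :: "complex mat"
  assumes X: "X \<in> carrier_mat d d" and Y: "Y \<in> carrier_mat d d"
  shows "(X - a \<cdot>\<^sub>m 1\<^sub>m d) * (Y - b \<cdot>\<^sub>m 1\<^sub>m d) - (Y - b \<cdot>\<^sub>m 1\<^sub>m d) * (X - a \<cdot>\<^sub>m 1\<^sub>m d) = X * Y - Y * X"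
proof (rule eq_matI)
  fix i j assume "i < dim_row (X * Y - Y * X)" "j < dim_col (X * Y - Y * X)"
  then have "i < d" "j < d" using X Y by auto
  then show "((X - a \<cdot>\<^sub>m 1\<^sub>m d) * (Y - b \<cdot>\<^sub>m 1\<^sub>m d) - (Y - b \<cdot>\<^sub>m 1\<^sub>m d) * (X - a \<cdot>\<^sub>m 1\<^sub>m d)) $$ (i, j) = (X * Y - Y * X) $$ (i, j)"
    using X Y by (simp add: scalar_prod_def atLeast0LessThan algebra_simps sum.distrib sum_subtractf
        if_distrib[of "times _"] cong: if_cong)
qed (use X Y in auto)

definition traceless_part :: "nat \<Rightarrow> complex mat \<Rightarrow> complex mat" where
  "traceless_part d X = X - (mtrace X / of_nat d) \<cdot>\<^sub>m 1\<^sub>m d"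

lemma traceless_part_carrier: "X \<in> carrier_mat d d \<Longrightarrow> traceless_part d X \<in> carrier_mat d d"
  unfolding traceless_part_def by (rule minus_carrier_mat) simp

lemma mtrace_traceless_part:
  "0 < d \<Longrightarrow> X \<in> carrier_mat d d \<Longrightarrow> mtrace (traceless_part d X) = 0"
  by (simp add: traceless_part_def mtrace_def sum_subtractf)

lemma traceless_part_id: "X \<in> carrier_mat d d \<Longrightarrow> mtrace X = 0 \<Longrightarrow> traceless_part d X = X"
  by (intro eq_matI) (auto simp: traceless_part_def)

lemma traceless_part_add:
  "X \<in> carrier_mat d d \<Longrightarrow> Y \<in> carrier_mat d d \<Longrightarrow>
   traceless_part d (X + Y) = traceless_part d X + traceless_part d Y"
  by (intro eq_matI) (auto simp: traceless_part_def mtrace_def sum.distrib add_divide_distrib)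

lemma traceless_part_smult:
  "X \<in> carrier_mat d d \<Longrightarrow> traceless_part d (c \<cdot>\<^sub>m X) = c \<cdot>\<^sub>m traceless_part d X"
  by (intro eq_matI) (auto simp: traceless_part_def mtrace_def sum_distrib_left algebra_simps)

lemma traceless_part_commutator:
  "X \<in> carrier_mat d d \<Longrightarrow> Y \<in> carrier_mat d d \<Longrightarrow>
   traceless_part d X * traceless_part d Y - traceless_part d Y * traceless_part d X = X * Y - Y * X"
  unfolding traceless_part_def by (rule commutator_shift_one_mat)

section \<open>Iterated operators and eigenvectors\<close>

lemma funpow_last_nonzero:
  fixes f :: "'a::zero \<Rightarrow> 'a"
  assumes "(f ^^ k) v = 0" and "v \<noteq> 0"
  shows "\<exists>j. (f ^^ j) v \<noteq> 0 \<and> f ((f ^^ j) v) = 0"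
  using assms
proof (induction k)
  case (Suc k)
  then show ?case by (cases "(f ^^ k) v = 0") auto
qed simp

lemma sorted_key_less_nth:
  assumes "sorted (map f xs)" and "x \<in> set xs" and "i < length xs" and "f x < f (xs ! i)"
  shows "\<exists>j<i. xs ! j = x"
proof -
  obtain j where j: "j < length xs" "xs ! j = x" using assms(2) by (auto simp: in_set_conv_nth)
  have "j < i"
  proof (rule ccontr)
    assume "\<not> j < i"
    then have "f (xs ! i) \<le> f (xs ! j)"
      using sorted_nth_mono[OF assms(1), of i j] j(1) by simp
    then show False using assms(4) j(2) by simp
  qed
  then show ?thesis using j(2) by blast
qed

lemma common_zero_of_locally_nilpotent:
  fixes fs :: "('a::zero \<Rightarrow> 'a) list" and P :: "'a \<Rightarrow> bool"
  assumes nilpotent: "\<And>f u. f \<in> set fs \<Longrightarrow> \<exists>k. (f ^^ k) u = 0"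
    and invariant: "\<And>f u. f \<in> set fs \<Longrightarrow> P u \<Longrightarrow> P (f u)"
    and triangular: "\<And>i j u. i < length fs \<Longrightarrow> j < i \<Longrightarrow> P u \<Longrightarrow> (\<forall>j<i. (fs ! j) u = 0) \<Longrightarrow>
        (fs ! j) ((fs ! i) u) = 0"
    and "P v" "v \<noteq> 0"
  shows "\<exists>w. P w \<and> w \<noteq> 0 \<and> (\<forall>f\<in>set fs. f w = 0)"
proof -
  have "\<exists>w. P w \<and> w \<noteq> 0 \<and> (\<forall>j<m. (fs ! j) w = 0)" if "m \<le> length fs" for m
    using that
  proof (induction m)
    case 0
    then show ?case using \<open>P v\<close> \<open>v \<noteq> 0\<close> by blast
  next
    case (Suc m)
    then obtain w where w: "P w" "w \<noteq> 0" "\<forall>j<m. (fs ! j) w = 0" by auto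
    let ?f = "fs ! m"
    have m: "m < length fs" "?f \<in> set fs" using Suc.prems by auto
    have iterate: "P ((?f ^^ s) w) \<and> (\<forall>j<m. (fs ! j) ((?f ^^ s) w) = 0)" for s
      by (induction s) (use w invariant[OF m(2)] triangular[OF m(1)] in auto)
    obtain k where "(?f ^^ k) w = 0" using nilpotent[OF m(2)] by blast
    then obtain s where "(?f ^^ s) w \<noteq> 0" "?f ((?f ^^ s) w) = 0"
      using funpow_last_nonzero w(2) by blast
    then show ?case using iterate[of s] by (auto simp: less_Suc_eq)
  qed
  from this[OF order_refl] show ?thesis by (metis in_set_conv_nth)
qed

sublocale vector_space \<subseteq> endo: vector_space_pair scale scale ..

context vector_space
begin

lemma sl2_string:
  assumes B: "Vector_Spaces.linear scale scale B" and "A x = 0"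
    and commutator: "\<And>r. A (B ((B ^^ r) x)) - B (A ((B ^^ r) x)) = scale (c - 2 * of_nat r) ((B ^^ r) x)"
  shows "A ((B ^^ Suc r) x) = scale (of_nat (Suc r) * (c - of_nat r)) ((B ^^ r) x)"
proof (induction r)
  case 0
  show ?case using commutator[of 0] \<open>A x = 0\<close> endo.linear_0[OF B] by (simp add: algebra_simps)
next
  case (Suc r)
  have "B (A ((B ^^ Suc r) x)) = scale (of_nat (Suc r) * (c - of_nat r)) ((B ^^ Suc r) x)"
    using Suc by (simp add: endo.linear_scale[OF B])
  moreover have "A ((B ^^ Suc (Suc r)) x) = B (A ((B ^^ Suc r) x)) + scale (c - 2 * of_nat (Suc r)) ((B ^^ Suc r) x)"
    using commutator[of "Suc r"] by (simp add: algebra_simps)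
  ultimately have "A ((B ^^ Suc (Suc r)) x)
      = scale (of_nat (Suc r) * (c - of_nat r) + (c - 2 * of_nat (Suc r))) ((B ^^ Suc r) x)"
    by (simp add: scale_left_distrib)
  moreover have "of_nat (Suc r) * (c - of_nat r) + (c - 2 * of_nat (Suc r))
      = of_nat (Suc (Suc r)) * (c - of_nat (Suc r))"
    by (simp add: algebra_simps)
  ultimately show ?case by simp
qed

lemma independent_eigenvectors:
  assumes f: "Vector_Spaces.linear scale scale f" and "finite U"
    and "\<forall>u\<in>U. u \<noteq> 0 \<and> f u = scale (ev u) u" and "inj_on ev U"
  shows "independent U"
  using assms(2-4)
proof (induction U rule: finite_induct)
  case (insert x F)
  have eig: "\<And>u. u \<in> insert x F \<Longrightarrow> u \<noteq> 0 \<and> f u = scale (ev u) u" using insert.prems(1) by blast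
  have "independent F" using insert by (auto intro: inj_on_subset)
  have "x \<notin> span F"
  proof
    assume "x \<in> span F"
    then obtain c where x: "x = (\<Sum>v\<in>F. scale (c v) v)" using span_finite[OF insert.hyps(1)] by auto
    have "f x = (\<Sum>v\<in>F. scale (c v * ev v) v)"
      unfolding x endo.linear_sum[OF f] by (intro sum.cong refl) (simp add: endo.linear_scale[OF f] eig)
    moreover have "scale (ev x) x = (\<Sum>v\<in>F. scale (ev x * c v) v)"
      by (simp add: x scale_sum_right)
    ultimately have "f x - scale (ev x) x = (\<Sum>v\<in>F. scale (c v * ev v) v) - (\<Sum>v\<in>F. scale (ev x * c v) v)"
      by simp
    also have "\<dots> = (\<Sum>v\<in>F. scale (c v * (ev v - ev x)) v)"
      unfolding sum_subtractf[symmetric]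
      by (intro sum.cong refl) (simp add: right_diff_distrib scale_left_diff_distrib mult.commute)
    finally have "(\<Sum>v\<in>F. scale (c v * (ev v - ev x)) v) = 0" using eig by simp
    then have "\<forall>v\<in>F. c v * (ev v - ev x) = 0"
      using independentD[OF \<open>independent F\<close> insert.hyps(1) subset_refl, of "\<lambda>v. c v * (ev v - ev x)"] by blast
    moreover have "\<forall>v\<in>F. ev v \<noteq> ev x"
      using insert.prems(2) insert.hyps(2) by (auto simp: inj_on_def)
    ultimately have "x = 0" by (simp add: x)
    then show False using eig by simp
  qed
  then show ?case using \<open>independent F\<close> by (rule independent_insertI)
qed (simp add: independent_empty)

lemma finite_eigenvalues_in_span:
  assumes f: "Vector_Spaces.linear scale scale f" and "finite B"
  shows "finite {c. \<exists>u\<in>span B. u \<noteq> 0 \<and> f u = scale c u}" (is "finite ?C")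
proof (rule ccontr)
  assume "infinite ?C"
  then obtain C where C: "C \<subseteq> ?C" "finite C" "card C = Suc (card B)"
    using infinite_arbitrarily_large by blast
  define vec where "vec c = (SOME u. u \<in> span B \<and> u \<noteq> 0 \<and> f u = scale c u)" for c
  have vec: "vec c \<in> span B \<and> vec c \<noteq> 0 \<and> f (vec c) = scale c (vec c)" if "c \<in> C" for c
  proof -
    have "\<exists>u. u \<in> span B \<and> u \<noteq> 0 \<and> f u = scale c u" using C(1) that by blast
    then show ?thesis unfolding vec_def by (rule someI_ex)
  qed
  have inj: "inj_on vec C"
  proof (rule inj_onI)
    fix c c' assume "c \<in> C" "c' \<in> C" "vec c = vec c'"
    then have "scale c (vec c) = scale c' (vec c)" using vec by metis
    then show "c = c'" using vec \<open>c \<in> C\<close> by simp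
  qed
  have "independent (vec ` C)"
  proof (rule independent_eigenvectors[OF f, where ev = "the_inv_into C vec"])
    show "\<forall>u\<in>vec ` C. u \<noteq> 0 \<and> f u = scale (the_inv_into C vec u) u"
      using vec by (auto simp: the_inv_into_f_f[OF inj])
  qed (use C(2) inj_on_the_inv_into[OF inj] in auto)
  moreover have "vec ` C \<subseteq> span B" using vec by blast
  ultimately have "card (vec ` C) \<le> card B"
    using independent_span_bound[OF \<open>finite B\<close>] by blast
  then show False using C(3) card_image[OF inj] by simp
qed

end

section \<open>Representations of gl_d\<close>

definition root_shift :: "nat \<Rightarrow> nat \<Rightarrow> (nat \<Rightarrow> 'a::ring_1) \<Rightarrow> nat \<Rightarrow> 'a" where
  "root_shift p r nu = (\<lambda>k. nu k + (if k = p then 1 else 0) - (if k = r then 1 else 0))"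

lemma root_shift_funpow:
  "(root_shift p r ^^ m) nu k = nu k + of_nat m * ((if k = p then 1 else 0) - (if k = r then 1 else 0))"
  by (induction m) (auto simp: root_shift_def algebra_simps)

text \<open>With \<open>\<rho>\<close> the Weyl vector, \<open>weyl_pairing d \<nu> = (\<nu>, 2\<rho>)\<close> and
  \<open>casimir_value d \<nu> = (\<nu>, \<nu> + 2\<rho>)\<close>.\<close>
definition weyl_pairing :: "nat \<Rightarrow> (nat \<Rightarrow> 'a::ab_group_add) \<Rightarrow> 'a" where
  "weyl_pairing d nu = (\<Sum>a<d. \<Sum>b<d. if a < b then nu a - nu b else 0)"

definition casimir_value :: "nat \<Rightarrow> (nat \<Rightarrow> 'a::comm_ring_1) \<Rightarrow> 'a" where
  "casimir_value d nu = (\<Sum>a<d. nu a ^ 2) + weyl_pairing d nu"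

text \<open>Listed by decreasing height \<open>b - a\<close>, so that the commutator of a raising operator with
  a later one in the list is a combination of earlier ones.\<close>
definition positive_pairs :: "nat \<Rightarrow> (nat \<times> nat) list" where
  "positive_pairs d = sort_key (\<lambda>(a, b). int a - int b) [(a, b). a \<leftarrow> [0..<d], b \<leftarrow> [0..<d], a < b]"

lemma set_positive_pairs: "set (positive_pairs d) = {(a, b). a < b \<and> b < d}"
  by (auto simp: positive_pairs_def)

lemma sorted_positive_pairs: "sorted (map (\<lambda>(a, b). int a - int b) (positive_pairs d))"
  by (simp add: positive_pairs_def)

locale gl_rep = vector_space scale
  for scale :: "'k::field_char_0 \<Rightarrow> 'v::ab_group_add \<Rightarrow> 'v" +
  fixes d :: nat and E :: "nat \<Rightarrow> nat \<Rightarrow> 'v \<Rightarrow> 'v"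
  assumes linear_E: "Vector_Spaces.linear scale scale (E a b)"
    and E_commutator: "\<lbrakk>a < d; b < d; p < d; r < d\<rbrakk> \<Longrightarrow>
      E a b (E p r v) - E p r (E a b v) = (if b = p then E a r v else 0) - (if r = a then E p b v else 0)"
begin

lemma E_0 [simp]: "E a b 0 = 0"
  by (rule endo.linear_0[OF linear_E])

lemma E_add: "E a b (x + y) = E a b x + E a b y"
  by (rule endo.linear_add[OF linear_E])

lemma E_diff: "E a b (x - y) = E a b x - E a b y"
  by (rule endo.linear_diff[OF linear_E])

lemma E_scale: "E a b (scale c x) = scale c (E a b x)"
  by (rule endo.linear_scale[OF linear_E])

lemma E_sum: "E a b (sum f S) = (\<Sum>i\<in>S. E a b (f i))"
  by (rule endo.linear_sum[OF linear_E])

definition weight_vector :: "(nat \<Rightarrow> 'k) \<Rightarrow> 'v \<Rightarrow> bool" where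
  "weight_vector nu v \<longleftrightarrow> (\<forall>a<d. E a a v = scale (nu a) v)"

definition highest_vector :: "'v \<Rightarrow> bool" where
  "highest_vector w \<longleftrightarrow> (\<forall>a b. a < b \<longrightarrow> b < d \<longrightarrow> E a b w = 0)"

definition casimir :: "'v \<Rightarrow> 'v" where
  "casimir v = (\<Sum>a<d. \<Sum>b<d. E a b (E b a v))"

definition raising_operators :: "('v \<Rightarrow> 'v) list" where
  "raising_operators = map (\<lambda>(a, b). E a b) (positive_pairs d)"

lemma set_raising_operators: "set raising_operators = {E a b | a b. a < b \<and> b < d}"
  by (auto simp: raising_operators_def set_positive_pairs)

lemma E_commute:
  "\<lbrakk>a < d; b < d; p < d; r < d\<rbrakk> \<Longrightarrow>
   E a b (E p r v) = E p r (E a b v) + ((if b = p then E a r v else 0) - (if r = a then E p b v else 0))"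
  by (metis E_commutator add.commute diff_eq_eq)

lemma weight_vector_E:
  assumes v: "weight_vector nu v" and "p \<noteq> r" "p < d" "r < d"
  shows "weight_vector (root_shift p r nu) (E p r v)"
  unfolding weight_vector_def
proof (intro allI impI)
  fix a assume "a < d"
  then have "E a a (E p r v) = scale (nu a) (E p r v)
      + ((if a = p then E p r v else 0) - (if r = a then E p r v else 0))"
    using E_commute[of a a p r v] v assms(3,4) by (auto simp: weight_vector_def E_scale)
  then show "E a a (E p r v) = scale (root_shift p r nu a) (E p r v)"
    using \<open>p \<noteq> r\<close> by (auto simp: root_shift_def scale_left_distrib scale_left_diff_distrib)
qed

lemma weight_vector_E_funpow:
  "weight_vector nu v \<Longrightarrow> p \<noteq> r \<Longrightarrow> p < d \<Longrightarrow> r < d \<Longrightarrow>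
   weight_vector ((root_shift p r ^^ m) nu) ((E p r ^^ m) v)"
  by (induction m) (auto intro: weight_vector_E)

lemma sl2_string_weight_vector:
  assumes "a \<noteq> b" "a < d" "b < d" "weight_vector nu v" "E a b v = 0"
  shows "E a b ((E b a ^^ Suc r) v) = scale (of_nat (Suc r) * (nu a - nu b - of_nat r)) ((E b a ^^ r) v)"
proof (rule sl2_string[where A = "E a b" and B = "E b a", OF linear_E \<open>E a b v = 0\<close>])
  fix s
  let ?w = "(E b a ^^ s) v"
  have "weight_vector ((root_shift b a ^^ s) nu) ?w"
    using weight_vector_E_funpow assms by auto
  then have "E a a ?w = scale (nu a - of_nat s) ?w" "E b b ?w = scale (nu b + of_nat s) ?w"
    using assms by (auto simp: weight_vector_def root_shift_funpow)
  moreover have "nu a - of_nat s - (nu b + of_nat s) = nu a - nu b - 2 * of_nat s"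
    by simp
  ultimately have "E a a ?w - E b b ?w = scale (nu a - nu b - 2 * of_nat s) ?w"
    by (metis scale_left_diff_distrib)
  then show "E a b (E b a ?w) - E b a (E a b ?w) = scale (nu a - nu b - 2 * of_nat s) ?w"
    using E_commutator[of a b b a ?w] assms by simp
qed

lemma linear_casimir: "Vector_Spaces.linear scale scale casimir"
  unfolding Vector_Spaces.linear_iff
  by (simp add: vector_space_axioms casimir_def E_add E_scale sum.distrib scale_sum_right)

lemma casimir_E:
  assumes "p < d" "r < d"
  shows "casimir (E p r v) = E p r (casimir v)"
proof -
  have "E p r (E a b (E b a v)) = E a b (E b a (E p r v))
      + ((if r = a then E p b (E b a v) else 0) - (if b = p then E a r (E b a v) else 0))
      + ((if r = b then E a b (E p a v) else 0) - (if a = p then E a b (E b r v) else 0))"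
    if "a < d" "b < d" for a b
    using E_commute[of p r a b "E b a v"] E_commute[of p r b a v] that assms
    by (simp add: E_add E_diff if_distrib[where f = "E a b"])
  then have "E p r (casimir v) = (\<Sum>a<d. \<Sum>b<d. E a b (E b a (E p r v))
      + ((if r = a then E p b (E b a v) else 0) - (if b = p then E a r (E b a v) else 0))
      + ((if r = b then E a b (E p a v) else 0) - (if a = p then E a b (E b r v) else 0)))"
    unfolding casimir_def E_sum by (intro sum.cong refl) simp
  also have "\<dots> = casimir (E p r v)"
  proof -
    have outer: "(\<Sum>b<d. if P then f b else 0) = (if P then \<Sum>b<d. f b else 0)" for P and f :: "nat \<Rightarrow> 'v"
      by simp
    show ?thesis using assms by (simp add: casimir_def sum.distrib sum_subtractf outer)
  qed
  finally show ?thesis by simp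
qed

lemma casimir_highest_vector:
  assumes w: "weight_vector nu w" and "highest_vector w"
  shows "casimir w = scale (casimir_value d nu) w"
proof -
  have "E a b (E b a w) = scale (if a < b then nu a - nu b else if a = b then nu a ^ 2 else 0) w"
    if "a < d" "b < d" for a b
  proof (cases "a < b")
    case True
    then have "E a b (E b a w) = E a a w - E b b w"
      using E_commutator[of a b b a w] that \<open>highest_vector w\<close> by (simp add: highest_vector_def)
    then show ?thesis
      using w that True by (simp add: weight_vector_def scale_left_diff_distrib)
  next
    case False
    then show ?thesis
      using w that \<open>highest_vector w\<close>
      by (cases "a = b") (auto simp: weight_vector_def highest_vector_def E_scale power2_eq_square)
  qed
  then have "casimir w = (\<Sum>a<d. \<Sum>b<d. scale (if a < b then nu a - nu b else if a = b then nu a ^ 2 else 0) w)"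
    unfolding casimir_def by (intro sum.cong refl) simp
  also have "\<dots> = scale (\<Sum>a<d. \<Sum>b<d. if a < b then nu a - nu b else if a = b then nu a ^ 2 else 0) w"
    by (simp add: scale_sum_left)
  also have "(\<Sum>a<d. \<Sum>b<d. if a < b then nu a - nu b else if a = b then nu a ^ 2 else 0) = casimir_value d nu"
    unfolding casimir_value_def weyl_pairing_def sum.distrib[symmetric]
  proof (intro sum.cong refl)
    fix a assume "a \<in> {..<d}"
    have "(\<Sum>b<d. if a < b then nu a - nu b else if a = b then nu a ^ 2 else 0)
        = (\<Sum>b<d. (if b = a then nu a ^ 2 else 0) + (if a < b then nu a - nu b else 0))"
      by (intro sum.cong) auto
    then show "(\<Sum>b<d. if a < b then nu a - nu b else if a = b then nu a ^ 2 else 0)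
        = nu a ^ 2 + (\<Sum>b<d. if a < b then nu a - nu b else 0)"
      using \<open>a \<in> {..<d}\<close> by (simp add: sum.distrib)
  qed
  finally show ?thesis .
qed

lemma raising_operators_triangular:
  assumes i: "i < length raising_operators" and "j < i"
    and killed: "\<forall>j<i. (raising_operators ! j) u = 0"
  shows "(raising_operators ! j) ((raising_operators ! i) u) = 0"
proof -
  let ?xs = "positive_pairs d" and ?key = "\<lambda>(a::nat, b::nat). int a - int b"
  have nth: "k < length ?xs \<Longrightarrow> raising_operators ! k = (case ?xs ! k of (a, b) \<Rightarrow> E a b)" for k
    by (simp add: raising_operators_def)
  have killed_pair: "E a b u = 0"
    if mem: "(a, b) \<in> set ?xs" and less: "?key (a, b) < ?key (?xs ! i)" for a b
  proof -
    obtain j' where "j' < i" "?xs ! j' = (a, b)"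
      using sorted_key_less_nth[OF sorted_positive_pairs mem _ less] i by (auto simp: raising_operators_def)
    then show ?thesis using killed nth[of j'] i by (auto simp: raising_operators_def)
  qed
  obtain a b c e where ab: "?xs ! j = (a, b)" "a < b" "b < d" and ce: "?xs ! i = (c, e)" "c < e" "e < d"
    using i \<open>j < i\<close> nth_mem[of i ?xs] nth_mem[of j ?xs] by (auto simp: raising_operators_def set_positive_pairs)
  have "E a b u = 0" using killed \<open>j < i\<close> ab(1) nth[of j] i by (auto simp: raising_operators_def)
  then have "E a b (E c e u) = (if b = c then E a e u else 0) - (if e = a then E c b u else 0)"
    using E_commutator[of a b c e u] ab ce by simp
  also have "\<dots> = 0"
    using killed_pair[of a e] killed_pair[of c b] ab ce by (auto simp: set_positive_pairs)
  finally show ?thesis using i \<open>j < i\<close> ab ce nth[of i] nth[of j] by (simp add: raising_operators_def)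
qed

end

locale integrable_gl_rep = gl_rep +
  assumes E_locally_nilpotent: "a \<noteq> b \<Longrightarrow> a < d \<Longrightarrow> b < d \<Longrightarrow> \<exists>k. (E a b ^^ k) v = 0"
begin

lemma E_weight_vector_nonzero:
  assumes "a \<noteq> b" "a < d" "b < d" "weight_vector nu v" "v \<noteq> 0"
    and not_nat: "\<And>r. nu a - nu b \<noteq> of_nat r"
  shows "E a b v \<noteq> 0"
proof
  assume "E a b v = 0"
  have "(E b a ^^ r) v \<noteq> 0" for r
  proof (induction r)
    case (Suc r)
    have "of_nat (Suc r) * (nu a - nu b - of_nat r) \<noteq> 0"
      using not_nat[of r] by (simp del: of_nat_Suc)
    then show ?case
      using sl2_string_weight_vector[OF assms(1-4) \<open>E a b v = 0\<close>, of r] Suc by auto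
  qed (simp add: \<open>v \<noteq> 0\<close>)
  then show False using E_locally_nilpotent[of b a v] assms by auto
qed

lemma weight_difference_Ints:
  assumes "a < d" "b < d" "weight_vector nu v" "v \<noteq> 0"
  shows "nu a - nu b \<in> \<int>"
proof (rule ccontr)
  assume not_int: "nu a - nu b \<notin> \<int>"
  then have "a \<noteq> b" by auto
  have "(E a b ^^ k) v \<noteq> 0" for k
  proof (induction k)
    case (Suc k)
    let ?nu = "(root_shift a b ^^ k) nu"
    have shift: "?nu a - ?nu b = nu a - nu b + 2 * of_nat k"
      using \<open>a \<noteq> b\<close> by (simp add: root_shift_funpow algebra_simps)
    have "?nu a - ?nu b \<noteq> of_nat r" for r
    proof
      assume "?nu a - ?nu b = of_nat r"
      then have "nu a - nu b = of_int (int r - 2 * int k)" using shift by (simp add: eq_diff_eq)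
      then show False using not_int by simp
    qed
    then show ?case
      using E_weight_vector_nonzero[OF \<open>a \<noteq> b\<close> assms(1,2) weight_vector_E_funpow[OF assms(3) \<open>a \<noteq> b\<close> assms(1,2)] Suc]
      by simp
  qed (simp add: \<open>v \<noteq> 0\<close>)
  then show False using E_locally_nilpotent[OF \<open>a \<noteq> b\<close> assms(1,2)] by blast
qed

lemma exists_highest_vector:
  assumes "P v" "v \<noteq> 0" and invariant: "\<And>a b u. a < b \<Longrightarrow> b < d \<Longrightarrow> P u \<Longrightarrow> P (E a b u)"
  shows "\<exists>w. P w \<and> w \<noteq> 0 \<and> highest_vector w"
proof -
  have "\<exists>w. P w \<and> w \<noteq> 0 \<and> (\<forall>f\<in>set raising_operators. f w = 0)"
  proof (rule common_zero_of_locally_nilpotent[of raising_operators P v])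
    show "\<exists>k. (f ^^ k) u = 0" and "P u \<Longrightarrow> P (f u)" if "f \<in> set raising_operators" for f u
      using that E_locally_nilpotent invariant by (auto simp: set_raising_operators)
    show "(raising_operators ! j) ((raising_operators ! i) u) = 0"
      if "i < length raising_operators" "j < i" "\<forall>j<i. (raising_operators ! j) u = 0" for i j u
      using that by (rule raising_operators_triangular)
  qed (use assms(1,2) in auto)
  then show ?thesis by (auto simp: highest_vector_def set_raising_operators)
qed

end

section \<open>Integral labels\<close>

lemma weyl_pairing_add: "weyl_pairing d (\<lambda>k. y k + w k) = weyl_pairing d y + weyl_pairing d w"
  unfolding weyl_pairing_def sum.distrib[symmetric] by (intro sum.cong refl) auto

lemma weyl_pairing_diff_const: "weyl_pairing d (\<lambda>k. nu k - c) = weyl_pairing d nu"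
  unfolding weyl_pairing_def by (intro sum.cong refl) (simp add: algebra_simps)

lemma weyl_pairing_of_int: "weyl_pairing d (of_int \<circ> y) = of_int (weyl_pairing d y)"
  by (simp add: weyl_pairing_def of_int_sum if_distrib[of of_int] cong: if_cong)

lemma weyl_pairing_closed_form: "weyl_pairing d y = (\<Sum>a<d. (int d - 1 - 2 * int a) * y a)"
proof (induction d)
  case (Suc d)
  have "weyl_pairing (Suc d) y = weyl_pairing d y + (\<Sum>a<d. y a - y d)"
    by (simp add: weyl_pairing_def sum.distrib)
  also have "\<dots> = (\<Sum>a<d. (int (Suc d) - 1 - 2 * int a) * y a) - int d * y d"
    by (simp add: Suc sum_subtractf sum.distrib[symmetric] algebra_simps)
  also have "\<dots> = (\<Sum>a<Suc d. (int (Suc d) - 1 - 2 * int a) * y a)"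
    by (simp add: algebra_simps)
  finally show ?case .
qed (simp add: weyl_pairing_def)

lemma weyl_pairing_root_shift:
  assumes "p \<noteq> r" "p < d" "r < d"
  shows "weyl_pairing d (root_shift p r y) = weyl_pairing d y + 2 * int r - 2 * int p"
proof -
  have "weyl_pairing d (root_shift p r y) = (\<Sum>a<d. (int d - 1 - 2 * int a) * y a
      + (if a = p then int d - 1 - 2 * int a else 0) - (if a = r then int d - 1 - 2 * int a else 0))"
    unfolding weyl_pairing_closed_form root_shift_def by (intro sum.cong refl) (auto simp: algebra_simps)
  also have "\<dots> = weyl_pairing d y + (int d - 1 - 2 * int p) - (int d - 1 - 2 * int r)"
    using assms by (simp add: sum.distrib sum_subtractf weyl_pairing_closed_form)
  finally show ?thesis by simp
qed

lemma root_shift_of_int: "root_shift p r (of_int \<circ> y) = of_int \<circ> root_shift p r y"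
  by (auto simp: root_shift_def fun_eq_iff)

definition int_root_comb :: "nat \<Rightarrow> (nat \<Rightarrow> nat) \<Rightarrow> nat \<Rightarrow> int" where
  "int_root_comb d m = (\<lambda>k. (if k < d - 1 then int (m k) else 0) - (if 0 < k \<and> k < d then int (m (k - 1)) else 0))"

lemma of_int_int_root_comb: "of_int (int_root_comb d m k) = root_comb d m k"
  by (auto simp: int_root_comb_def root_comb_def)

lemma weyl_pairing_int_root_comb:
  assumes "0 < d"
  shows "weyl_pairing d (int_root_comb d m) = 2 * (\<Sum>j<d - 1. int (m j))"
proof -
  obtain e where d: "d = Suc e" using assms by (cases d) auto
  define c where "c a = int d - 1 - 2 * int a" for a
  have "weyl_pairing d (int_root_comb d m)
      = (\<Sum>a<Suc e. c a * (if a < e then int (m a) else 0)) - (\<Sum>a<Suc e. c a * (if 0 < a then int (m (a - 1)) else 0))"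
    unfolding weyl_pairing_closed_form int_root_comb_def d c_def sum_subtractf[symmetric]
    by (intro sum.cong refl) (auto simp: algebra_simps)
  also have "\<dots> = (\<Sum>a<e. c a * int (m a)) - (\<Sum>a<e. c (Suc a) * int (m a))"
    by (subst (2) sum.lessThan_Suc_shift) simp
  also have "\<dots> = (\<Sum>a<e. 2 * int (m a))"
    unfolding sum_subtractf[symmetric] by (intro sum.cong refl) (simp add: c_def algebra_simps)
  finally show ?thesis by (simp add: d sum_distrib_left)
qed

lemma sum_squares_root_shift:
  assumes "p \<noteq> r" "p < d" "r < d"
  shows "(\<Sum>k<d. root_shift p r y k ^ 2) = (\<Sum>k<d. y k ^ 2) + 2 * y p - 2 * y r + (2 :: 'a::comm_ring_1)"
proof -
  have "(\<Sum>k<d. root_shift p r y k ^ 2)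
      = (\<Sum>k<d. y k ^ 2 + (if k = p then 2 * y p + 1 else 0) + (if k = r then 1 - 2 * y r else 0))"
    using assms by (intro sum.cong refl) (auto simp: root_shift_def power2_eq_square algebra_simps)
  then show ?thesis using assms by (simp add: sum.distrib)
qed

lemma casimir_value_bound:
  "of_int (weyl_pairing d y) \<le> Re (casimir_value d (\<lambda>a. of_int (y a) - (\<Sum>k<d. of_int (y k)) / of_nat d))"
proof -
  define t where "t = (\<Sum>k<d. real_of_int (y k)) / real d"
  have "casimir_value d (\<lambda>a. of_int (y a) - (\<Sum>k<d. of_int (y k)) / of_nat d)
      = complex_of_real (casimir_value d (\<lambda>a. of_int (y a) - t))"
    by (simp add: t_def casimir_value_def weyl_pairing_def of_real_sum if_distrib[of of_real] cong: if_cong)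
  moreover have "weyl_pairing d (\<lambda>a. real_of_int (y a) - t) = of_int (weyl_pairing d y)"
    using weyl_pairing_of_int[of d y] by (simp add: weyl_pairing_diff_const comp_def)
  ultimately show ?thesis by (simp add: casimir_value_def sum_nonneg)
qed

definition bounded_labels :: "nat \<Rightarrow> (nat \<Rightarrow> int) set" where
  "bounded_labels d = {y. \<forall>k. (k \<in> {..<d} \<longrightarrow> y k \<in> {- int d..int d}) \<and> (k \<notin> {..<d} \<longrightarrow> y k = 0)}"

lemma finite_bounded_labels: "finite (bounded_labels d)"
  unfolding bounded_labels_def by (intro finite_set_of_finite_funs) auto

lemma close_labels_bound:
  assumes "\<forall>i. Suc i < d \<longrightarrow> \<bar>y i - y (Suc i)\<bar> \<le> (1::int)" and "k < d"
  shows "\<bar>y k - y (d - 1)\<bar> \<le> int (d - 1 - k)"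
  using \<open>k < d\<close>
proof (induction "d - 1 - k" arbitrary: k)
  case 0
  then have "k = d - 1" by simp
  then show ?case by simp
next
  case (Suc m)
  then have k: "Suc k < d" "m = d - 1 - Suc k" by auto
  have "\<bar>y (Suc k) - y (d - 1)\<bar> \<le> int (d - 1 - Suc k)" using Suc.hyps(1)[OF k(2)] k by simp
  moreover have "\<bar>y k - y (Suc k)\<bar> \<le> 1" using assms(1) k by simp
  ultimately show ?case using k by linarith
qed

lemma close_labels_normalize:
  assumes "\<forall>i. Suc i < d \<longrightarrow> \<bar>y i - y (Suc i)\<bar> \<le> (1::int)"
  shows "(\<lambda>k. if k < d then y k - y (d - 1) else 0) \<in> bounded_labels d"
  using close_labels_bound[OF assms] by (fastforce simp: bounded_labels_def abs_le_iff)

lemma shift_weight_zero: "shift_weight d lam (\<lambda>_. 0) = lam"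
  by (cases lam) (auto simp: shift_weight_def root_comb_def)

lemma shift_weight_add: "shift_weight d (shift_weight d lam m) m' = shift_weight d lam (\<lambda>j. m j + m' j)"
  by (cases lam) (auto simp: shift_weight_def root_comb_def fun_eq_iff)

lemma exists_maximal_shift:
  fixes P :: "(nat \<Rightarrow> nat) \<Rightarrow> bool"
  assumes "P m0" and bounded: "\<And>m. P m \<Longrightarrow> (\<Sum>j<k. m j) \<le> B"
  shows "\<exists>m. P m \<and> (\<forall>m'. (\<exists>j<k. m' j \<noteq> 0) \<longrightarrow> \<not> P (\<lambda>j. m j + m' j))"
proof -
  obtain m where m: "P m" "\<And>m'. P m' \<Longrightarrow> (\<Sum>j<k. m' j) \<le> (\<Sum>j<k. m j)"
    using Lattices_Big.ex_has_greatest_nat[of P m0 "\<lambda>m. \<Sum>j<k. m j" "Suc B"] assms by force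
  have "\<not> P (\<lambda>j. m j + m' j)" if "j < k" "m' j \<noteq> 0" for m' j
  proof
    assume "P (\<lambda>j. m j + m' j)"
    moreover have "m' j \<le> (\<Sum>j<k. m' j)" using that by (intro member_le_sum) auto
    ultimately show False using m(2) that by (fastforce simp: sum.distrib)
  qed
  then show ?thesis using m(1) by blast
qed

section \<open>Modules over hat-tau(d,q)\<close>

lemma zero_zvec [simp]: "(\<lambda>_. 0) \<in> zvec n"
  by (simp add: zvec_def)

lemma zero_radf [simp]: "(\<lambda>_. 0) \<in> radf n q"
  by (simp add: radf_def fq_def)

lemma vadd_zero [simp]: "vadd (\<lambda>_. 0) (\<lambda>_. 0) = (\<lambda>_. 0)"
  by (simp add: vadd_def)

lemma sig_zero [simp]: "sig n q (\<lambda>_. 0) (\<lambda>_. 0) = 1"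
  by (simp add: sig_def)

lemma unitvec_zvec: "i < n \<Longrightarrow> unitvec i \<in> zvec n"
  by (simp add: unitvec_def zvec_def)

lemma vneg_unitvec_zvec: "i < n \<Longrightarrow> vneg (unitvec i) \<in> zvec n"
  by (simp add: unitvec_def zvec_def vneg_def)

lemma vadd_unitvec_vneg [simp]: "vadd (unitvec i) (vneg (unitvec i)) = (\<lambda>_. 0)"
  by (simp add: unitvec_def vadd_def vneg_def fun_eq_iff)

lemma tau_elem_diag_of: "(\<Sum>k<d. x k) = 0 \<Longrightarrow> tau_elem n d q (diag_of d x) (\<lambda>_. 0)"
  by (simp add: tau_elem_def mtrace_diag_of)

lemma tau_elem_elem_mat: "a \<noteq> b \<Longrightarrow> a < d \<Longrightarrow> tau_elem n d q (elem_mat d a b) (\<lambda>_. 0)"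
  by (simp add: tau_elem_def mtrace_elem_mat)

locale tau_hat_rep =
  fixes n d :: nat and q :: "nat \<Rightarrow> nat \<Rightarrow> complex"
    and sc :: "complex \<Rightarrow> 'v::ab_group_add \<Rightarrow> 'v"
    and rho :: "complex mat \<Rightarrow> (nat \<Rightarrow> int) \<Rightarrow> 'v \<Rightarrow> 'v"
    and z :: "(nat \<Rightarrow> int) \<Rightarrow> (nat \<Rightarrow> int) \<Rightarrow> 'v \<Rightarrow> 'v"
    and D :: "nat \<Rightarrow> 'v \<Rightarrow> 'v"
  assumes module: "tau_hat_module n d q sc rho z D" and d_pos: "0 < d"
begin

sublocale vector_space sc
  using module by (simp add: tau_hat_module_def)

lemma linear_rho: "tau_elem n d q X a \<Longrightarrow> Vector_Spaces.linear sc sc (rho X a)"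
  using module unfolding tau_hat_module_def by (elim conjE) blast

lemma linear_z: "a \<in> zvec n \<Longrightarrow> b \<in> zvec n \<Longrightarrow> vadd a b \<in> radf n q \<Longrightarrow> Vector_Spaces.linear sc sc (z a b)"
  using module unfolding tau_hat_module_def by (elim conjE) blast

lemma linear_D: "i < n \<Longrightarrow> Vector_Spaces.linear sc sc (D i)"
  using module unfolding tau_hat_module_def by (elim conjE) blast

lemma rho_add: "tau_elem n d q X a \<Longrightarrow> tau_elem n d q Y a \<Longrightarrow> rho (X + Y) a v = rho X a v + rho Y a v"
  using module unfolding tau_hat_module_def by simp

lemma rho_smult: "tau_elem n d q X a \<Longrightarrow> rho (c \<cdot>\<^sub>m X) a v = sc c (rho X a v)"
  using module unfolding tau_hat_module_def by simp

lemma z_antisym: "a \<in> zvec n \<Longrightarrow> b \<in> zvec n \<Longrightarrow> vadd a b \<in> radf n q \<Longrightarrow> z a b v + z b a v = 0"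
  using module unfolding tau_hat_module_def by (elim conjE) blast

lemma rho_commutator:
  assumes "tau_elem n d q X a" "tau_elem n d q Y b"
  shows "rho X a (rho Y b v) - rho Y b (rho X a v) =
    rho (sig n q a b \<cdot>\<^sub>m (X * Y) - sig n q b a \<cdot>\<^sub>m (Y * X)) (vadd a b) v
    + (if vadd a b \<in> radf n q then sc (mtrace (X * Y)) (z a b v) else 0)"
proof -
  have "\<forall>X Y a b. tau_elem n d q X a \<and> tau_elem n d q Y b \<longrightarrow>
      comm (rho X a) (rho Y b) = (\<lambda>v. rho (sig n q a b \<cdot>\<^sub>m (X * Y) - sig n q b a \<cdot>\<^sub>m (Y * X)) (vadd a b) v
        + (if vadd a b \<in> radf n q then sc (mtrace (X * Y)) (z a b v) else 0))"
    using module unfolding tau_hat_module_def by (elim conjE) assumption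
  from this[rule_format, OF conjI[OF assms]] show ?thesis by (simp add: comm_def fun_eq_iff)
qed

lemma rho_z_commute:
  assumes "tau_elem n d q X a" "b \<in> zvec n" "c \<in> zvec n" "vadd b c \<in> radf n q"
  shows "rho X a (z b c v) = z b c (rho X a v)"
proof -
  have "\<forall>X a b c. tau_elem n d q X a \<and> b \<in> zvec n \<and> c \<in> zvec n \<and> vadd b c \<in> radf n q \<longrightarrow>
      comm (rho X a) (z b c) = (\<lambda>v. 0)"
    using module unfolding tau_hat_module_def by (elim conjE) assumption
  from this[rule_format, OF conjI[OF assms(1) conjI[OF assms(2) conjI[OF assms(3,4)]]]]
  show ?thesis by (simp add: comm_def fun_eq_iff)
qed

lemma D_rho_commutator:
  assumes "i < n" "tau_elem n d q X a"
  shows "D i (rho X a v) - rho X a (D i v) = sc (of_int (a i)) (rho X a v)"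
proof -
  have "\<forall>i<n. \<forall>X a. tau_elem n d q X a \<longrightarrow> comm (D i) (rho X a) = (\<lambda>v. sc (of_int (a i)) (rho X a v))"
    using module unfolding tau_hat_module_def by (elim conjE) assumption
  from this[rule_format, OF assms] show ?thesis by (simp add: comm_def fun_eq_iff)
qed

text \<open>The relation \<open>x \<otimes> y + y \<otimes> x \<in> J\<close> with \<open>x = y = 1\<close> gives \<open>2 \<langle>1, 1\<rangle> = 0\<close>.\<close>
lemma z_zero_zero: "z (\<lambda>_. 0) (\<lambda>_. 0) v = 0"
proof -
  have "sc 2 (z (\<lambda>_. 0) (\<lambda>_. 0) v) = z (\<lambda>_. 0) (\<lambda>_. 0) v + z (\<lambda>_. 0) (\<lambda>_. 0) v"
    using scale_left_distrib[of 1 1 "z (\<lambda>_. 0) (\<lambda>_. 0) v"] by simp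
  then show ?thesis using z_antisym[of "\<lambda>_. 0" "\<lambda>_. 0" v] by simp
qed

definition sl_action :: "complex mat \<Rightarrow> 'v \<Rightarrow> 'v" where
  "sl_action X = rho (traceless_part d X) (\<lambda>_. 0)"

lemma tau_elem_traceless_part: "X \<in> carrier_mat d d \<Longrightarrow> tau_elem n d q (traceless_part d X) (\<lambda>_. 0)"
  using d_pos by (simp add: tau_elem_def traceless_part_carrier mtrace_traceless_part)

lemma linear_sl_action: "X \<in> carrier_mat d d \<Longrightarrow> Vector_Spaces.linear sc sc (sl_action X)"
  unfolding sl_action_def by (rule linear_rho[OF tau_elem_traceless_part])

lemma sl_action_eq_rho: "X \<in> carrier_mat d d \<Longrightarrow> mtrace X = 0 \<Longrightarrow> sl_action X = rho X (\<lambda>_. 0)"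
  by (simp add: sl_action_def traceless_part_id)

lemma sl_action_add:
  "X \<in> carrier_mat d d \<Longrightarrow> Y \<in> carrier_mat d d \<Longrightarrow> sl_action (X + Y) v = sl_action X v + sl_action Y v"
  by (simp add: sl_action_def traceless_part_add rho_add tau_elem_traceless_part)

lemma sl_action_smult: "X \<in> carrier_mat d d \<Longrightarrow> sl_action (c \<cdot>\<^sub>m X) v = sc c (sl_action X v)"
  by (simp add: sl_action_def traceless_part_smult rho_smult tau_elem_traceless_part)

lemma sl_action_diff:
  assumes "X \<in> carrier_mat d d" "Y \<in> carrier_mat d d"
  shows "sl_action (X - Y) v = sl_action X v - sl_action Y v"
proof -
  have "X - Y = X + (-1) \<cdot>\<^sub>m Y" using assms by (intro eq_matI) auto
  then show ?thesis using assms by (simp add: sl_action_add sl_action_smult)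
qed

lemma sl_action_zero: "sl_action (0\<^sub>m d d) v = 0"
  using sl_action_smult[of "0\<^sub>m d d" 0 v] by simp

lemma sl_action_commutator:
  assumes X: "X \<in> carrier_mat d d" and Y: "Y \<in> carrier_mat d d"
  shows "sl_action X (sl_action Y v) - sl_action Y (sl_action X v) = sl_action (X * Y - Y * X) v"
proof -
  have "sl_action X (sl_action Y v) - sl_action Y (sl_action X v) = rho (X * Y - Y * X) (\<lambda>_. 0) v"
    using rho_commutator[OF tau_elem_traceless_part[OF X] tau_elem_traceless_part[OF Y], of v]
      traceless_part_commutator[OF X Y]
    by (simp add: sl_action_def z_zero_zero)
  also have "\<dots> = sl_action (X * Y - Y * X) v"
  proof -
    have "X * Y - Y * X \<in> carrier_mat d d" using X Y by auto
    then show ?thesis using sl_action_eq_rho mtrace_commutator[OF X Y] by simp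
  qed
  finally show ?thesis .
qed

text \<open>\<open>E a b\<close> is the action of the matrix unit \<open>E\<^sub>a\<^sub>b\<close> in degree zero; on the diagonal it is taken
  through the traceless part \<open>E\<^sub>a\<^sub>a - I/d\<close>, so that the \<open>E a b\<close> satisfy the relations of gl_d.\<close>
definition E :: "nat \<Rightarrow> nat \<Rightarrow> 'v \<Rightarrow> 'v" where
  "E a b = sl_action (elem_mat d a b)"

lemma E_eq_rho: "a \<noteq> b \<Longrightarrow> a < d \<Longrightarrow> E a b = rho (elem_mat d a b) (\<lambda>_. 0)"
  by (simp add: E_def sl_action_eq_rho mtrace_elem_mat)

sublocale gl_rep sc d E
proof (intro gl_rep.intro gl_rep_axioms.intro)
  show "vector_space sc" by (rule vector_space_axioms)
  show "Vector_Spaces.linear sc sc (E a b)" for a b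
    unfolding E_def by (rule linear_sl_action) simp
  show "E a b (E p r v) - E p r (E a b v) = (if b = p then E a r v else 0) - (if r = a then E p b v else 0)"
    if "a < d" "b < d" "p < d" "r < d" for a b p r v
    using that
    by (simp add: E_def sl_action_commutator sl_action_diff elem_mat_mult sl_action_zero)
qed

abbreviation W :: "(nat \<Rightarrow> complex) \<times> (nat \<Rightarrow> complex) \<times> (nat \<Rightarrow> complex) \<Rightarrow> 'v set" where
  "W \<equiv> weight_space n d sc rho z D"

lemma mem_weight_space:
  "v \<in> W (mu, g, de) \<longleftrightarrow>
     (\<forall>x. (\<Sum>k<d. x k) = 0 \<longrightarrow> rho (diag_of d x) (\<lambda>_. 0) v = sc (\<Sum>k<d. mu k * x k) v)
   \<and> (\<forall>i<n. z (unitvec i) (vneg (unitvec i)) v = sc (g i) v)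
   \<and> (\<forall>i<n. D i v = sc (de i) v)"
  by (simp add: weight_space_def)

lemma zero_in_weight_space: "0 \<in> W lam"
proof -
  obtain mu g de where "lam = (mu, g, de)" by (cases lam)
  moreover have "rho (diag_of d x) (\<lambda>_. 0) 0 = 0" if "(\<Sum>k<d. x k) = 0" for x
    using endo.linear_0[OF linear_rho[OF tau_elem_diag_of[OF that]]] .
  moreover have "z (unitvec i) (vneg (unitvec i)) 0 = 0" if "i < n" for i
    using endo.linear_0[OF linear_z[OF unitvec_zvec[OF that] vneg_unitvec_zvec[OF that]]] by simp
  moreover have "D i 0 = 0" if "i < n" for i
    using endo.linear_0[OF linear_D[OF that]] .
  ultimately show ?thesis by (simp add: mem_weight_space)
qed

lemma weight_space_cong_const:
  assumes "\<And>k. k < d \<Longrightarrow> mu k = mu' k + c"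
  shows "W (mu, g, de) = W (mu', g, de)"
proof -
  have "(\<Sum>k<d. mu k * x k) = (\<Sum>k<d. mu' k * x k)" if "(\<Sum>k<d. x k) = 0" for x
  proof -
    have "(\<Sum>k<d. mu k * x k) = (\<Sum>k<d. mu' k * x k) + c * (\<Sum>k<d. x k)"
      by (simp add: assms algebra_simps sum.distrib sum_distrib_left)
    then show ?thesis using that by simp
  qed
  then show ?thesis by (auto simp: mem_weight_space)
qed

lemma weight_space_weight_vector:
  assumes "v \<in> W (mu, g, de)"
  shows "weight_vector (\<lambda>a. mu a - (\<Sum>k<d. mu k) / of_nat d) v"
  unfolding weight_vector_def
proof (intro allI impI)
  fix a assume "a < d"
  define x where "x = (\<lambda>k. (if k = a then 1 else 0) - 1 / (of_nat d :: complex))"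
  have "(\<Sum>k<d. x k) = 0" using \<open>a < d\<close> d_pos by (simp add: x_def sum_subtractf)
  moreover have "traceless_part d (elem_mat d a a) = diag_of d x"
    using \<open>a < d\<close> by (simp add: traceless_part_def mtrace_elem_mat elem_mat_minus_scalar x_def)
  ultimately have "E a a v = sc (\<Sum>k<d. mu k * x k) v"
    using assms by (simp add: E_def sl_action_def mem_weight_space)
  also have "(\<Sum>k<d. mu k * x k) = mu a - (\<Sum>k<d. mu k) / of_nat d"
    using \<open>a < d\<close>
    by (simp add: x_def algebra_simps sum_subtractf sum_divide_distrib if_distrib[of "times _"] cong: if_cong)
  finally show "E a a v = sc (mu a - (\<Sum>k<d. mu k) / of_nat d) v" .
qed

lemma diag_action_E:
  assumes "(\<Sum>k<d. x k) = 0" "p < d" "r < d"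
  shows "rho (diag_of d x) (\<lambda>_. 0) (E p r u) = E p r (rho (diag_of d x) (\<lambda>_. 0) u) + sc (x p - x r) (E p r u)"
proof -
  have diag: "sl_action (diag_of d x) = rho (diag_of d x) (\<lambda>_. 0)"
    using assms(1) by (simp add: sl_action_eq_rho mtrace_diag_of)
  have "sl_action (diag_of d x) (E p r u) - E p r (sl_action (diag_of d x) u)
      = sl_action (x p \<cdot>\<^sub>m elem_mat d p r - x r \<cdot>\<^sub>m elem_mat d p r) u"
    using assms by (simp add: E_def sl_action_commutator diag_of_mult_elem_mat elem_mat_mult_diag_of)
  also have "\<dots> = sc (x p - x r) (E p r u)"
    by (simp add: sl_action_diff sl_action_smult E_def scale_left_diff_distrib)
  finally show ?thesis by (simp add: diag algebra_simps)
qed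

lemma E_weight_space:
  assumes "p \<noteq> r" "p < d" "r < d" and v: "v \<in> W (mu, g, de)"
  shows "E p r v \<in> W (root_shift p r mu, g, de)"
proof -
  have "rho (diag_of d x) (\<lambda>_. 0) (E p r v) = sc (\<Sum>k<d. root_shift p r mu k * x k) (E p r v)"
    if x: "(\<Sum>k<d. x k) = 0" for x
  proof -
    have "rho (diag_of d x) (\<lambda>_. 0) (E p r v) = sc (\<Sum>k<d. mu k * x k) (E p r v) + sc (x p - x r) (E p r v)"
      using diag_action_E[OF x assms(2,3), of v] v x by (simp add: mem_weight_space E_scale)
    also have "\<dots> = sc ((\<Sum>k<d. mu k * x k) + (x p - x r)) (E p r v)"
      by (simp add: scale_left_distrib)
    also have "(\<Sum>k<d. mu k * x k) + (x p - x r) = (\<Sum>k<d. root_shift p r mu k * x k)"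
      using assms(2,3)
      by (simp add: root_shift_def algebra_simps sum.distrib sum_subtractf if_distrib[of "times _"] cong: if_cong)
    finally show ?thesis .
  qed
  moreover have "z (unitvec i) (vneg (unitvec i)) (E p r v) = sc (g i) (E p r v)" if "i < n" for i
  proof -
    have "z (unitvec i) (vneg (unitvec i)) (E p r v) = E p r (z (unitvec i) (vneg (unitvec i)) v)"
      using rho_z_commute[OF tau_elem_elem_mat[OF assms(1,2)] unitvec_zvec[OF that] vneg_unitvec_zvec[OF that]]
        assms by (simp add: E_eq_rho)
    then show ?thesis using v that by (simp add: mem_weight_space E_scale)
  qed
  moreover have "D i (E p r v) = sc (de i) (E p r v)" if "i < n" for i
  proof -
    have "D i (E p r v) = E p r (D i v)"
      using D_rho_commutator[OF that tau_elem_elem_mat[OF assms(1,2)], of v] assms by (simp add: E_eq_rho)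
    then show ?thesis using v that by (simp add: mem_weight_space E_scale)
  qed
  ultimately show ?thesis by (simp add: mem_weight_space)
qed

lemma exists_nonzero_weight_vector:
  assumes "weight_module n d sc rho z D" and "(UNIV :: 'v set) \<noteq> {0}"
  shows "\<exists>mu g de v. v \<in> W (mu, g, de) \<and> v \<noteq> 0"
proof (rule ccontr)
  assume "\<not> ?thesis"
  then have "W lam \<subseteq> {0}" for lam by (cases lam) auto
  then have "span (\<Union>lam. W lam) \<subseteq> span {0}" by (intro span_mono) blast
  then have "span (\<Union>lam. W lam) \<subseteq> {0}" by (simp add: span_insert_0)
  then show False using assms unfolding weight_module_def by blast
qed

lemma weight_space_shift_weight:
  assumes "\<And>k. k < d \<Longrightarrow> mu k = of_int (y k) + c"
  shows "W (shift_weight d (mu, g, de) m) = W (of_int \<circ> (\<lambda>k. y k + int_root_comb d m k), g, de)"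
  unfolding shift_weight_def prod.case
  by (rule weight_space_cong_const[where c = c]) (simp add: assms of_int_int_root_comb[symmetric])

end

locale integrable_tau_hat_rep = tau_hat_rep +
  assumes integrable: "integrable n d sc rho z D"
begin

sublocale integrable_gl_rep sc d E
proof (intro integrable_gl_rep.intro integrable_gl_rep_axioms.intro)
  show "gl_rep sc d E"
    by (simp add: gl_rep_def gl_rep_axioms_def vector_space_axioms linear_E E_commutator)
  show "\<exists>k. (E a b ^^ k) v = 0" if "a \<noteq> b" "a < d" "b < d" for a b v
    using integrable that zero_zvec unfolding integrable_def E_eq_rho[OF that(1,2)] by blast
qed

lemma integral_labels:
  assumes "v \<in> W (mu, g, de)" "v \<noteq> 0"
  shows "\<exists>y. \<forall>k<d. mu k = of_int (y k) + mu (d - 1)"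
proof -
  have "mu k - mu (d - 1) \<in> \<int>" if "k < d" for k
    using weight_difference_Ints[OF that _ weight_space_weight_vector[OF assms(1)] assms(2), of "d - 1"] d_pos
    by simp
  then have "\<forall>k<d. \<exists>i. mu k = of_int i + mu (d - 1)"
    by (metis Ints_cases diff_eq_eq)
  then show ?thesis by metis
qed

lemma exists_highest_label:
  assumes "v \<in> W (of_int \<circ> y, g, de)" "v \<noteq> 0"
  shows "\<exists>y' w. w \<in> W (of_int \<circ> y', g, de) \<and> w \<noteq> 0 \<and> weyl_pairing d y \<le> weyl_pairing d y' \<and> highest_vector w"
proof -
  let ?P = "\<lambda>u. \<exists>y'. u \<in> W (of_int \<circ> y', g, de) \<and> weyl_pairing d y \<le> weyl_pairing d y'"
  have "?P (E a b u)" if ab: "a < b" "b < d" and "?P u" for a b u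
  proof -
    obtain y' where u: "u \<in> W (of_int \<circ> y', g, de)" "weyl_pairing d y \<le> weyl_pairing d y'"
      using \<open>?P u\<close> by blast
    have "E a b u \<in> W (of_int \<circ> root_shift a b y', g, de)"
      using E_weight_space[OF _ _ _ u(1), of a b] ab by (simp add: root_shift_of_int)
    moreover have "weyl_pairing d y' \<le> weyl_pairing d (root_shift a b y')"
      using weyl_pairing_root_shift[of a b d y'] ab by simp
    ultimately show ?thesis using u(2) by fastforce
  qed
  then show ?thesis using exists_highest_vector[of ?P v] assms by blast
qed

lemma descend_to_close_labels:
  assumes "v \<in> W (of_int \<circ> y, g, de)" "v \<noteq> 0" "casimir v = sc c v"
  shows "\<exists>y' u. u \<in> W (of_int \<circ> y', g, de) \<and> u \<noteq> 0 \<and> casimir u = sc c u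
    \<and> (\<forall>i. Suc i < d \<longrightarrow> \<bar>y' i - y' (Suc i)\<bar> \<le> 1)"
  using assms
proof (induction "nat (\<Sum>k<d. y k ^ 2)" arbitrary: y v rule: less_induct)
  case less
  show ?case
  proof (cases "\<forall>i. Suc i < d \<longrightarrow> \<bar>y i - y (Suc i)\<bar> \<le> 1")
    case True
    then show ?thesis using less.prems by blast
  next
    case False
    then obtain i where i: "Suc i < d" "\<bar>y i - y (Suc i)\<bar> > 1" by auto
    obtain a b where ab: "a \<noteq> b" "a < d" "b < d" "y a + 1 < y b"
    proof (cases "y (Suc i) < y i")
      case True
      then show ?thesis using that[of "Suc i" i] i by auto
    next
      case False
      then show ?thesis using that[of i "Suc i"] i by auto
    qed
    define u where "u = E a b v"
    have "of_int (y a) - of_int (y b) \<noteq> (of_nat r :: complex)" for r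
    proof
      assume "of_int (y a) - of_int (y b) = (of_nat r :: complex)"
      then have "y a - y b = int r" by (metis of_int_diff of_int_eq_iff of_int_of_nat_eq)
      then show False using ab(4) by simp
    qed
    then have "u \<noteq> 0"
      unfolding u_def
      using E_weight_vector_nonzero[OF ab(1-3) weight_space_weight_vector[OF less.prems(1)] less.prems(2)]
      by simp
    moreover have "u \<in> W (of_int \<circ> root_shift a b y, g, de)"
      using E_weight_space[OF ab(1-3) less.prems(1)] by (simp add: u_def root_shift_of_int)
    moreover have "casimir u = sc c u"
      using casimir_E[OF ab(2,3)] less.prems(3) by (simp add: u_def E_scale)
    moreover have "nat (\<Sum>k<d. root_shift a b y k ^ 2) < nat (\<Sum>k<d. y k ^ 2)"
    proof -
      have "0 \<le> (\<Sum>k<d. root_shift a b y k ^ 2)" by (simp add: sum_nonneg)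
      then show ?thesis using sum_squares_root_shift[OF ab(1-3), of y] ab(4) by (simp add: nat_less_eq_zless)
    qed
    ultimately show ?thesis using less.hyps by blast
  qed
qed

lemma exists_close_label_eigenvector:
  assumes "v \<in> W (of_int \<circ> y, g, de)" "v \<noteq> 0"
  shows "\<exists>y' u c. u \<in> W (of_int \<circ> y', g, de) \<and> u \<noteq> 0 \<and> casimir u = sc c u
    \<and> (\<forall>i. Suc i < d \<longrightarrow> \<bar>y' i - y' (Suc i)\<bar> \<le> 1) \<and> of_int (weyl_pairing d y) \<le> Re c"
proof -
  obtain y' w where w: "w \<in> W (of_int \<circ> y', g, de)" "w \<noteq> 0" "weyl_pairing d y \<le> weyl_pairing d y'"
      "highest_vector w"
    using exists_highest_label[OF assms] by blast
  define c :: complex where "c = casimir_value d (\<lambda>a. of_int (y' a) - (\<Sum>k<d. of_int (y' k)) / of_nat d)"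
  have "casimir w = sc c w"
    using casimir_highest_vector[OF weight_space_weight_vector[OF w(1)] w(4)] by (simp add: c_def)
  moreover have "of_int (weyl_pairing d y) \<le> Re c"
    using casimir_value_bound[of d y'] w(3) unfolding c_def by (meson of_int_le_iff order_trans)
  ultimately show ?thesis using descend_to_close_labels[OF w(1,2)] by blast
qed

lemma weyl_pairing_bounded:
  assumes "finite_weight_spaces n d sc rho z D"
  shows "\<exists>M. \<forall>y v. v \<in> W (of_int \<circ> y, g, de) \<longrightarrow> v \<noteq> 0 \<longrightarrow> weyl_pairing d y \<le> M"
proof -
  obtain Bf where Bf: "\<And>lam. finite (Bf lam)" "\<And>lam. W lam \<subseteq> span (Bf lam)"
    using assms unfolding finite_weight_spaces_def by metis
  define B where "B = (\<Union>y\<in>bounded_labels d. Bf (of_int \<circ> y, g, de))"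
  define C where "C = {c. \<exists>u\<in>span B. u \<noteq> 0 \<and> casimir u = sc c u}"
  have "finite B" using finite_bounded_labels Bf(1) by (simp add: B_def)
  then have "finite C" unfolding C_def by (rule finite_eigenvalues_in_span[OF linear_casimir])
  have "of_int (weyl_pairing d y) \<le> Max (insert 0 (Re ` C))"
    if v: "v \<in> W (of_int \<circ> y, g, de)" "v \<noteq> 0" for y v
  proof -
    obtain y' u c where u: "u \<in> W (of_int \<circ> y', g, de)" "u \<noteq> 0" "casimir u = sc c u"
        "\<forall>i. Suc i < d \<longrightarrow> \<bar>y' i - y' (Suc i)\<bar> \<le> 1" "of_int (weyl_pairing d y) \<le> Re c"
      using exists_close_label_eigenvector[OF v] by blast
    define y'' where "y'' = (\<lambda>k. if k < d then y' k - y' (d - 1) else 0)"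
    have "u \<in> W (of_int \<circ> y'', g, de)"
      using u(1) weight_space_cong_const[of "of_int \<circ> y'" "of_int \<circ> y''" "of_int (y' (d - 1))" g de]
      by (simp add: y''_def)
    moreover have "y'' \<in> bounded_labels d"
      unfolding y''_def by (rule close_labels_normalize[OF u(4)])
    ultimately have "u \<in> span B"
      using Bf(2) span_mono[of "Bf (of_int \<circ> y'', g, de)" B] unfolding B_def by blast
    then have "c \<in> C" using u(2,3) by (auto simp: C_def)
    then have "Re c \<le> Max (insert 0 (Re ` C))" using \<open>finite C\<close> by simp
    then show ?thesis using u(5) by linarith
  qed
  then show ?thesis by (meson le_of_int_ceiling of_int_le_iff order_trans)
qed

lemma shift_height_bounded:
  assumes "finite_weight_spaces n d sc rho z D" and labels: "\<And>k. k < d \<Longrightarrow> mu k = of_int (y k) + c"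
  shows "\<exists>B. \<forall>m. W (shift_weight d (mu, g, de) m) \<noteq> {0} \<longrightarrow> (\<Sum>j<d - 1. m j) \<le> B"
proof -
  obtain M where M: "\<And>y v. v \<in> W (of_int \<circ> y, g, de) \<Longrightarrow> v \<noteq> 0 \<Longrightarrow> weyl_pairing d y \<le> M"
    using weyl_pairing_bounded[OF assms(1)] by blast
  have "(\<Sum>j<d - 1. m j) \<le> nat (M - weyl_pairing d y)" if "W (shift_weight d (mu, g, de) m) \<noteq> {0}" for m
  proof -
    have "W (of_int \<circ> (\<lambda>k. y k + int_root_comb d m k), g, de) \<noteq> {0}"
      using that weight_space_shift_weight[of mu y c g de m] labels by simp
    then obtain u where "u \<in> W (of_int \<circ> (\<lambda>k. y k + int_root_comb d m k), g, de)" "u \<noteq> 0"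
      using zero_in_weight_space by blast
    then have "weyl_pairing d (\<lambda>k. y k + int_root_comb d m k) \<le> M" by (rule M)
    then have "weyl_pairing d y + 2 * (\<Sum>j<d - 1. int (m j)) \<le> M"
      by (simp add: weyl_pairing_add weyl_pairing_int_root_comb[OF d_pos])
    moreover have "0 \<le> (\<Sum>j<d - 1. int (m j))" by (simp add: sum_nonneg)
    ultimately have "int (\<Sum>j<d - 1. m j) \<le> M - weyl_pairing d y" by (simp add: of_nat_sum)
    then have "nat (int (\<Sum>j<d - 1. m j)) \<le> nat (M - weyl_pairing d y)" by (rule nat_mono)
    then show ?thesis by (simp only: nat_int)
  qed
  then show ?thesis by blast
qed

end

theorem lemma3p5:
  fixes n d :: nat and q :: "nat \<Rightarrow> nat \<Rightarrow> complex"
    and sc :: "complex \<Rightarrow> 'v::ab_group_add \<Rightarrow> 'v"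
    and rho :: "complex mat \<Rightarrow> (nat \<Rightarrow> int) \<Rightarrow> 'v \<Rightarrow> 'v"
    and z :: "(nat \<Rightarrow> int) \<Rightarrow> (nat \<Rightarrow> int) \<Rightarrow> 'v \<Rightarrow> 'v"
    and D :: "nat \<Rightarrow> 'v \<Rightarrow> 'v"
  assumes "2 \<le> n" and "2 \<le> d" and "qmatrix n q"
    and "tau_hat_module n d q sc rho z D"
    and "irreducible_module n d q sc rho z D"
    and "integrable n d sc rho z D"
    and "finite_weight_spaces n d sc rho z D"
  shows "\<exists>lam. weight_space n d sc rho z D lam \<noteq> {0}
           \<and> (\<forall>m::nat \<Rightarrow> nat. (\<exists>j < d - 1. m j \<noteq> 0) \<longrightarrow>
                weight_space n d sc rho z D (shift_weight d lam m) = {0})"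
proof -
  \<comment> \<open>Irreducibility is only used for \<open>V \<noteq> 0\<close>.\<close>
  interpret integrable_tau_hat_rep n d q sc rho z D
    using assms(2,4,6) by unfold_locales auto
  have "weight_module n d sc rho z D" using assms(6) by (simp add: integrable_def)
  moreover have "(UNIV :: 'v set) \<noteq> {0}" using assms(5) by (simp add: irreducible_module_def)
  ultimately obtain mu g de v where v: "v \<in> W (mu, g, de)" "v \<noteq> 0"
    using exists_nonzero_weight_vector by blast
  obtain y where y: "\<And>k. k < d \<Longrightarrow> mu k = of_int (y k) + mu (d - 1)"
    using integral_labels[OF v] by blast
  let ?P = "\<lambda>m. W (shift_weight d (mu, g, de) m) \<noteq> {0}"
  obtain B where B: "\<And>m. ?P m \<Longrightarrow> (\<Sum>j<d - 1. m j) \<le> B"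
    using shift_height_bounded[of mu y "mu (d - 1)" g de] assms(7) y by blast
  have "W (mu, g, de) \<noteq> {0}" using v by blast
  then have "?P (\<lambda>_. 0)" by (simp add: shift_weight_zero)
  then have "\<exists>m. ?P m \<and> (\<forall>m'. (\<exists>j<d - 1. m' j \<noteq> 0) \<longrightarrow> \<not> ?P (\<lambda>j. m j + m' j))"
    using exists_maximal_shift[of ?P "\<lambda>_. 0" "d - 1" B] B by blast
  then obtain m where "?P m \<and> (\<forall>m'. (\<exists>j<d - 1. m' j \<noteq> 0) \<longrightarrow> \<not> ?P (\<lambda>j. m j + m' j))" ..
  then show ?thesis by (intro exI[of _ "shift_weight d (mu, g, de) m"]) (simp add: shift_weight_add)
qed

end
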